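(* Let $V_1$ and $V_2$ be real vector spaces of dimensions $d_1$ and $d_2$, let $U\subseteq V_1$ and $V\subseteq V_2$ be relatively compact open subsets, let $R_1,R_2>0$ and $0<\varepsilon\leq R_1^{d_1}R_2^{d_2}$, and define $$U\times_{R_1,R_2,\varepsilon}V:=\{(\alpha u,\beta v)\,;\,u\in U,\ v\in V,\ \alpha,\beta\in\mathbb{R},\ |\alpha|\leq R_1,\ |\beta|\leq R_2,\ |\alpha^{d_1}\beta^{d_2}|\leq\varepsilon\}.$$ If $U$ and $V$ are balanced, then $$U\times_{R_1,R_2,\varepsilon}V=\{(\alpha u,\beta v)\,;\,u\in U,\ v\in V,\ \alpha,\beta\in\mathbb{R},\ |\alpha|\leq R_1,\ |\beta|\leq R_2,\ |\alpha^{d_1}\beta^{d_2}|=\varepsilon\}.$$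
   Context: A subset $U$ of a real vector space is balanced if $\alpha U\subseteq U$ for all real $\alpha$ with $|\alpha|\leq 1$. *)

theory Defs
  imports "HOL-Analysis.Analysis"
begin

definition balanced :: "'a::real_vector set \<Rightarrow> bool" where
  "balanced U \<longleftrightarrow> (\<forall>\<alpha>::real. \<bar>\<alpha>\<bar> \<le> 1 \<longrightarrow> (\<lambda>u. \<alpha> *\<^sub>R u) ` U \<subseteq> U)"

definition relatively_compact :: "'a::topological_space set \<Rightarrow> bool" where
  "relatively_compact U \<longleftrightarrow> compact (closure U)"

end

theory Submission
  imports Defs
begin

text \<open>A point \<open>(\<alpha> u, \<beta> v)\<close> with \<open>\<bar>\<alpha>\<^sup>d\<^sup>1 \<beta>\<^sup>d\<^sup>2\<bar> \<le> \<epsilon>\<close> can be rewritten with larger scalars: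
  moving \<open>(\<bar>\<alpha>\<bar>, \<bar>\<beta>\<bar>)\<close> along the segment towards \<open>(R\<^sub>1, R\<^sub>2)\<close>, the product
  \<open>\<alpha>'\<^sup>d\<^sup>1 \<beta>'\<^sup>d\<^sup>2\<close> passes through \<open>\<epsilon>\<close> by the intermediate value theorem, and
  balancedness gives \<open>\<alpha> u = \<alpha>' u'\<close>, \<open>\<beta> v = \<beta>' v'\<close> with \<open>u' \<in> U\<close>, \<open>v' \<in> V\<close>.
  The exponents may be arbitrary.\<close>

lemma balanced_scaleR_image_mono:
  fixes U :: "'a::real_vector set"
  assumes "balanced U" and "\<bar>a\<bar> \<le> \<bar>b\<bar>"
  shows "(\<lambda>u. a *\<^sub>R u) ` U \<subseteq> (\<lambda>u. b *\<^sub>R u) ` U"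
proof (cases "b = 0")
  case True
  with assms(2) show ?thesis by simp
next
  case False
  have "a *\<^sub>R u \<in> (\<lambda>u. b *\<^sub>R u) ` U" if "u \<in> U" for u
  proof
    show "a *\<^sub>R u = b *\<^sub>R ((a / b) *\<^sub>R u)" using False by simp
    have "\<bar>a / b\<bar> \<le> 1" using assms(2) False by (simp add: abs_divide divide_le_eq_1)
    then show "(a / b) *\<^sub>R u \<in> U" using assms(1) that unfolding balanced_def by blast
  qed
  then show ?thesis by blast
qed

lemma power_product_level_set_between:
  fixes a b R1 R2 e :: real and d1 d2 :: nat
  assumes "\<bar>a\<bar> \<le> R1" "\<bar>b\<bar> \<le> R2" "\<bar>a ^ d1 * b ^ d2\<bar> \<le> e" "e \<le> R1 ^ d1 * R2 ^ d2"
  obtains a' b' where "\<bar>a\<bar> \<le> a'" "a' \<le> R1" "\<bar>b\<bar> \<le> b'" "b' \<le> R2" "a' ^ d1 * b' ^ d2 = e"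
proof -
  define x where "x t = \<bar>a\<bar> + t * (R1 - \<bar>a\<bar>)" for t :: real
  define y where "y t = \<bar>b\<bar> + t * (R2 - \<bar>b\<bar>)" for t :: real
  define f where "f t = x t ^ d1 * y t ^ d2" for t
  have "continuous_on {0..1} f" unfolding f_def x_def y_def by (intro continuous_intros)
  moreover have "f 0 \<le> e" using assms(3) by (simp add: f_def x_def y_def abs_mult power_abs)
  moreover have "e \<le> f 1" using assms(4) by (simp add: f_def x_def y_def)
  ultimately obtain t where t: "0 \<le> t" "t \<le> 1" "f t = e"
    using IVT'[of f 0 e 1] by auto
  have "\<bar>a\<bar> \<le> x t" "x t \<le> R1"
    using t assms(1) mult_left_le_one_le[of "R1 - \<bar>a\<bar>" t] by (simp_all add: x_def)
  moreover have "\<bar>b\<bar> \<le> y t" "y t \<le> R2"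
    using t assms(2) mult_left_le_one_le[of "R2 - \<bar>b\<bar>" t] by (simp_all add: y_def)
  ultimately show ?thesis using that t(3) unfolding f_def by blast
qed

theorem mainTheorem5:
  fixes U :: "'a::real_normed_vector set" and V :: "'b::real_normed_vector set"
    and d1 d2 :: nat and R1 R2 \<epsilon> :: real
  assumes fin1: "\<exists>B::'a set. finite B \<and> span B = UNIV"
    and fin2: "\<exists>B::'b set. finite B \<and> span B = UNIV"
    and d1: "d1 = dim (UNIV :: 'a set)"
    and d2: "d2 = dim (UNIV :: 'b set)"
    and "open U" and "relatively_compact U"
    and "open V" and "relatively_compact V"
    and "R1 > 0" and "R2 > 0"
    and "0 < \<epsilon>" and "\<epsilon> \<le> R1 ^ d1 * R2 ^ d2"
    and "balanced U" and "balanced V"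
  shows "{(\<alpha> *\<^sub>R u, \<beta> *\<^sub>R v) | u v \<alpha> \<beta>. u \<in> U \<and> v \<in> V \<and>
            \<bar>\<alpha>\<bar> \<le> R1 \<and> \<bar>\<beta>\<bar> \<le> R2 \<and> \<bar>\<alpha> ^ d1 * \<beta> ^ d2\<bar> \<le> \<epsilon>}
       = {(\<alpha> *\<^sub>R u, \<beta> *\<^sub>R v) | u v \<alpha> \<beta>. u \<in> U \<and> v \<in> V \<and>
            \<bar>\<alpha>\<bar> \<le> R1 \<and> \<bar>\<beta>\<bar> \<le> R2 \<and> \<bar>\<alpha> ^ d1 * \<beta> ^ d2\<bar> = \<epsilon>}"
    (is "?L = ?R")
proof
  show "?R \<subseteq> ?L" by force
next
  show "?L \<subseteq> ?R"
  proof
    fix p assume "p \<in> ?L"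
    then obtain u v a b where p: "p = (a *\<^sub>R u, b *\<^sub>R v)" and "u \<in> U" "v \<in> V"
      and ab: "\<bar>a\<bar> \<le> R1" "\<bar>b\<bar> \<le> R2" "\<bar>a ^ d1 * b ^ d2\<bar> \<le> \<epsilon>" by blast
    obtain a' b' where a': "\<bar>a\<bar> \<le> a'" "a' \<le> R1" and b': "\<bar>b\<bar> \<le> b'" "b' \<le> R2"
      and level: "a' ^ d1 * b' ^ d2 = \<epsilon>"
      using power_product_level_set_between[OF ab \<open>\<epsilon> \<le> R1 ^ d1 * R2 ^ d2\<close>] by blast
    obtain u' where "u' \<in> U" "a *\<^sub>R u = a' *\<^sub>R u'"
      using balanced_scaleR_image_mono[OF \<open>balanced U\<close>, of a a'] a'(1) \<open>u \<in> U\<close> by force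
    moreover obtain v' where "v' \<in> V" "b *\<^sub>R v = b' *\<^sub>R v'"
      using balanced_scaleR_image_mono[OF \<open>balanced V\<close>, of b b'] b'(1) \<open>v \<in> V\<close> by force
    moreover have "\<bar>a'\<bar> \<le> R1" "\<bar>b'\<bar> \<le> R2" "\<bar>a' ^ d1 * b' ^ d2\<bar> = \<epsilon>"
      using a' b' level \<open>0 < \<epsilon>\<close> by auto
    ultimately show "p \<in> ?R" unfolding p by blast
  qed
qed

end
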